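(* Consider selective layer fine-tuning in federated learning with one local step per epoch ($\tau=1$), run for $T$ epochs with learning rate $\eta>0$ from $\theta^0$. Assume: (i) ($\gamma$-smoothness) there is $\gamma>0$ with $\|\nabla f_i(\theta)-\nabla f_i(\theta')\|_2\le\gamma\|\theta-\theta'\|_2$ for all $\theta,\theta'$ and all $i\in\mathcal{N}$; (ii) (unbiased, bounded-variance stochastic gradients) for all $i$, $l$, $\theta$ and random mini-batches $\xi$, $\mathbb{E}[g_{i,l}(\theta;\xi)]=\nabla_l f_i(\theta)$, and there are $\sigma_l>0$ with $\|g_{i,l}(\theta;\xi)-\nabla_l f_i(\theta)\|^2\le\sigma_l^2$ for all $i$, and $\sum_{l\in\mathcal{L}_t}\sigma_l^2\le\sigma^2$ for all $t$; (iii) (gradient diversity) there are $\kappa_l>0$ with $\|\nabla_l f(\theta)-\nabla_l f_i(\theta)\|^2\le\kappa_l^2$ for all $i\in\mathcal{N}$, $l\in\mathcal{L}$ and all $\theta$. Let $C:=1-4\eta\gamma>0$. Then $$\min_{t\in[T]}\mathbb{E}\big[\|\nabla f(\theta^t)\|_2^2\big]\le\frac{2}{\eta CT}\big[f(\theta^0)-f(\theta^* )\big]+\frac{2\gamma\eta}{C}\sigma^2+\frac{1}{T}\sum_{t=1}^T\Big(\frac{1}{\gamma\eta C}+2\Big)\big(\mathcal{E}_{t,1}+\mathcal{E}_{t,2}\big),$$ where $\mathcal{E}_{t,1}=\mathbb{E}\big[\|\sum_{l\notin\mathcal{L}_t}\nabla_l f(\theta^t)\|^2\big]$ and $\mathcal{E}_{t,2}=\sum_{l\in\mathcal{L}_t}\chi_{\mathbf{w}_{t,l}\|\alpha}\kappa_l^2$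 with $\chi_{\mathbf{w}_{t,l}\|\alpha}=\sum_{i\in\mathcal{N}}\frac{(w_{i,l}^t-\alpha_i)^2}{\alpha_i}$.
   Context: There are $N$ clients $\mathcal{N}=\{1,\dots,N\}$; client $i$ has dataset $\mathcal{D}_i$ with $d_i>0$ samples, loss $F_i(\theta;\xi)$, local objective $f_i(\theta)=\frac1{d_i}\sum_{\xi\in\mathcal{D}_i}F_i(\theta;\xi)$; $\alpha_i=d_i/\sum_j d_j$ and the global objective is $f=\sum_i\alpha_i f_i$, which has a global minimizer $\theta^*$. The model $\theta\in\mathbb{R}^P$ is partitioned into $L$ layers indexed by $\mathcal{L}=\{1,\dots,L\}$; $\nabla_l F(\theta)$ denotes the gradient with respect to layer $l$'s parameters, viewed in $\mathbb{R}^P$ with zeros outside that block; $g_{i,l}(\theta;\xi)=\nabla_l F_i(\theta;\xi)$ is the stochastic layer gradient on mini-batch $\xi$. In each epoch $t$, a set $\mathcal{S}^t\subseteq\mathcal{N}$ of clients participates, each $i\in\mathcal{S}^t$ has a selected layer set $\mathcal{L}_i^t\subseteq\mathcal{L}$ (arbitrary, may vary with $i$ and $t$), and $\mathcal{L}_t=\bigcup_{i\in\mathcal{S}^t}\mathcal{L}_i^t$. Weights: $w_{i,l}^t=d_i/\sum_{j\in\mathcal{S}^t:\,l\in\mathcal{L}_j^t}d_j$ if $i\in\mathcal{S}^t$ and $l\in\mathcal{L}_i^t$, and $w_{i,l}^t=0$ otherwise (for every $i\in\mathcal{N}$). Update with $\tau=1$: each $i\in\mathcal{S}^t$ samples an independent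 mini-batch $\xi_i^t$, and $\theta^{t+1}=\theta^t-\eta\sum_{l\in\mathcal{L}_t}\sum_{i\in\mathcal{S}^t}w_{i,l}^t g_{i,l}(\theta^t;\xi_i^t)$. Expectations are over mini-batch sampling. *)

theory Defs
  imports "HOL-Probability.Probability"
begin

definition grad :: "('a::real_inner \<Rightarrow> real) \<Rightarrow> 'a \<Rightarrow> 'a" where
  "grad f x = (THE D. GDERIV f x :> D)"

definition lblock :: "('p \<Rightarrow> nat) \<Rightarrow> nat \<Rightarrow> real^'p \<Rightarrow> real^'p" where
  "lblock layer l v = (\<chi> j. if layer j = l then v $ j else 0)"

definition fobj :: "(nat \<Rightarrow> 'b \<Rightarrow> real^'p \<Rightarrow> real) \<Rightarrow> (nat \<Rightarrow> 'b set) \<Rightarrow> nat \<Rightarrow> real^'p \<Rightarrow> real" where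
  "fobj F D i \<theta> = (1 / real (card (D i))) * (\<Sum>\<xi>\<in>D i. F i \<xi> \<theta>)"

definition alpha :: "nat \<Rightarrow> (nat \<Rightarrow> 'b set) \<Rightarrow> nat \<Rightarrow> real" where
  "alpha N D i = real (card (D i)) / (\<Sum>j\<in>{1..N}. real (card (D j)))"

definition fglob :: "nat \<Rightarrow> (nat \<Rightarrow> 'b \<Rightarrow> real^'p \<Rightarrow> real) \<Rightarrow> (nat \<Rightarrow> 'b set) \<Rightarrow> real^'p \<Rightarrow> real" where
  "fglob N F D \<theta> = (\<Sum>i\<in>{1..N}. alpha N D i * fobj F D i \<theta>)"

definition sgrad :: "('p \<Rightarrow> nat) \<Rightarrow> (nat \<Rightarrow> 'b \<Rightarrow> real^'p \<Rightarrow> real) \<Rightarrow> nat \<Rightarrow> nat \<Rightarrow> real^'p \<Rightarrow> 'b \<Rightarrow> real^'p" where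
  "sgrad layer F i l \<theta> \<xi> = lblock layer l (grad (F i \<xi>) \<theta>)"

definition Lsel :: "(nat \<Rightarrow> nat set) \<Rightarrow> (nat \<Rightarrow> nat \<Rightarrow> nat set) \<Rightarrow> nat \<Rightarrow> nat set" where
  "Lsel S Ls t = (\<Union>i\<in>S t. Ls t i)"

definition wgt :: "(nat \<Rightarrow> 'b set) \<Rightarrow> (nat \<Rightarrow> nat set) \<Rightarrow> (nat \<Rightarrow> nat \<Rightarrow> nat set) \<Rightarrow> nat \<Rightarrow> nat \<Rightarrow> nat \<Rightarrow> real" where
  "wgt D S Ls t i l = (if i \<in> S t \<and> l \<in> Ls t i
      then real (card (D i)) / (\<Sum>j\<in>{j\<in>S t. l \<in> Ls t j}. real (card (D j)))
      else 0)"

definition chi2 :: "nat \<Rightarrow> (nat \<Rightarrow> 'b set) \<Rightarrow> (nat \<Rightarrow> nat set) \<Rightarrow> (nat \<Rightarrow> nat \<Rightarrow> nat set) \<Rightarrow> nat \<Rightarrow> nat \<Rightarrow> real" where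
  "chi2 N D S Ls t l = (\<Sum>i\<in>{1..N}. (wgt D S Ls t i l - alpha N D i)\<^sup>2 / alpha N D i)"

primrec traj :: "nat \<Rightarrow> ('p \<Rightarrow> nat) \<Rightarrow> (nat \<Rightarrow> 'b \<Rightarrow> real^'p \<Rightarrow> real) \<Rightarrow> (nat \<Rightarrow> 'b set)
    \<Rightarrow> (nat \<Rightarrow> nat set) \<Rightarrow> (nat \<Rightarrow> nat \<Rightarrow> nat set) \<Rightarrow> (nat \<Rightarrow> 'b pmf) \<Rightarrow> real \<Rightarrow> real^'p
    \<Rightarrow> nat \<Rightarrow> (real^'p) pmf" where
  "traj N layer F D S Ls Q \<eta> \<theta>0 0 = return_pmf \<theta>0"
| "traj N layer F D S Ls Q \<eta> \<theta>0 (Suc t) =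
     bind_pmf (traj N layer F D S Ls Q \<eta> \<theta>0 t) (\<lambda>\<theta>.
       map_pmf (\<lambda>\<xi>. \<theta> - \<eta> *\<^sub>R (\<Sum>l\<in>Lsel S Ls t. \<Sum>i\<in>S t.
                         wgt D S Ls t i l *\<^sub>R sgrad layer F i l \<theta> (\<xi> i)))
         (Pi_pmf (S t) undefined Q))"

end

theory Submission
  imports Defs
begin

text \<open>
  By \<open>\<gamma>\<close>-smoothness, one round moves \<open>f\<close> by at most
  \<open>-\<eta>\<langle>\<nabla>f(\<theta>), G\<rangle> + \<gamma>\<eta>\<^sup>2/2 \<parallel>G\<parallel>\<^sup>2\<close>, where \<open>G\<close> is the
  aggregated stochastic update. Split \<open>\<nabla>f(\<theta>) = A + B\<close> into its selected and unselected
  layers. The mean of \<open>G\<close> lives on the selected layers, hence is orthogonal to \<open>B\<close>; it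
  differs from \<open>A\<close> by a bias of squared norm at most \<open>\<E>\<^sub>t\<^sub>,\<^sub>2\<close> (a weighted
  Cauchy-Schwarz inequality turns the mismatch between the weights \<open>w\<close> and \<open>\<alpha>\<close> into the
  \<open>\<chi>\<^sup>2\<close> divergence), and \<open>G\<close> differs from its mean by at most \<open>\<sigma>\<close>. Completing
  squares, one round decreases \<open>\<bbbE> f\<close> by \<open>\<eta>C/2 (\<bbbE>\<parallel>\<nabla>f\<parallel>\<^sup>2 - \<bbbE>\<parallel>B\<parallel>\<^sup>2)\<close> up to
  \<open>(\<eta>/2 + 2\<gamma>\<eta>\<^sup>2) \<E>\<^sub>t\<^sub>,\<^sub>2 + \<gamma>\<eta>\<^sup>2\<sigma>\<^sup>2\<close>; telescoping over \<open>T\<close> rounds and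
  bounding the minimum by the average gives the claim. Since the noise is bounded, every iterate
  has bounded support, which makes all the expectations involved finite.
\<close>


section \<open>Gradients\<close>

lemma grad_eqI:
  fixes f :: "'a::euclidean_space \<Rightarrow> real"
  assumes "GDERIV f x :> D"
  shows "grad f x = D"
  unfolding grad_def
proof (rule the_equality)
  fix D' assume "GDERIV f x :> D'"
  then have "(\<lambda>h. h \<bullet> D') = (\<lambda>h. h \<bullet> D)"
    using has_derivative_unique assms unfolding gderiv_def by blast
  then have "(D - D') \<bullet> (D - D') = 0"
    by (metis inner_diff_right diff_self)
  then show "D' = D" by simp
qed (fact assms)

lemma GDERIV_grad:
  fixes f :: "'a::euclidean_space \<Rightarrow> real"
  assumes "f differentiable (at x)"
  shows "GDERIV f x :> grad f x"
proof -
  obtain f' where f': "(f has_derivative f') (at x)"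
    using assms unfolding differentiable_def by blast
  define D where "D = (\<Sum>b\<in>Basis. f' b *\<^sub>R b)"
  have "f' h = h \<bullet> D" for h
    using Linear_Algebra.linear_componentwise[OF has_derivative_linear[OF f'], of h 1]
    by (simp add: D_def inner_sum_right mult.commute)
  then have "GDERIV f x :> D"
    using f' unfolding gderiv_def by (metis ext)
  then show ?thesis using grad_eqI by metis
qed

lemma GDERIV_cmult: "GDERIV f x :> D \<Longrightarrow> GDERIV (\<lambda>x. c * f x) x :> c *\<^sub>R D"
  using GDERIV_mult[OF GDERIV_const] by fastforce

lemma GDERIV_sum:
  assumes "finite I" "\<And>i. i \<in> I \<Longrightarrow> GDERIV (f i) x :> D i"
  shows "GDERIV (\<lambda>x. \<Sum>i\<in>I. f i x) x :> (\<Sum>i\<in>I. D i)"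
  using assms by (induction I rule: finite_induct) (auto intro: GDERIV_add GDERIV_const)

lemma lipschitz_gradient_quadratic_bound:
  fixes f :: "'a::real_inner \<Rightarrow> real"
  assumes gderiv: "\<And>x. GDERIV f x :> g x"
    and lipschitz: "\<gamma>-lipschitz_on UNIV g"
  shows "f y \<le> f x + g x \<bullet> (y - x) + \<gamma> / 2 * (norm (y - x))\<^sup>2"
proof -
  define h where "h = y - x"
  \<comment> \<open>\<open>f\<close> on the segment minus its quadratic model; the Lipschitz bound makes it
    nonincreasing.\<close>
  define \<phi> where "\<phi> s = f (x + s *\<^sub>R h) - s * (g x \<bullet> h) - \<gamma> / 2 * s\<^sup>2 * (norm h)\<^sup>2" for s
  have \<phi>_deriv: "(\<phi> has_real_derivative (g (x + s *\<^sub>R h) \<bullet> h - g x \<bullet> h - \<gamma> * s * (norm h)\<^sup>2)) (at s)"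
    for s
  proof -
    have "((\<lambda>s. f (x + s *\<^sub>R h)) has_derivative (\<lambda>t. (t *\<^sub>R h) \<bullet> g (x + s *\<^sub>R h))) (at s)"
      by (rule has_derivative_compose[OF _ gderiv[unfolded gderiv_def]])
        (auto intro!: derivative_eq_intros)
    moreover have "(\<lambda>t. (t *\<^sub>R h) \<bullet> g (x + s *\<^sub>R h)) = (*) (g (x + s *\<^sub>R h) \<bullet> h)"
      by (auto simp: inner_commute)
    ultimately have "((\<lambda>s. f (x + s *\<^sub>R h)) has_real_derivative (g (x + s *\<^sub>R h) \<bullet> h)) (at s)"
      by (simp add: has_field_derivative_def)
    then show ?thesis unfolding \<phi>_def by (auto intro!: derivative_eq_intros)
  qed
  have "\<phi> 1 \<le> \<phi> 0"
  proof (rule DERIV_nonpos_imp_nonincreasing[of 0 1])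
    fix s :: real assume s: "0 \<le> s" "s \<le> 1"
    have "g (x + s *\<^sub>R h) \<bullet> h - g x \<bullet> h \<le> norm (g (x + s *\<^sub>R h) - g x) * norm h"
      by (metis inner_diff_left norm_cauchy_schwarz)
    also have "\<dots> \<le> \<gamma> * norm (s *\<^sub>R h) * norm h"
      using lipschitz_on_normD[OF lipschitz, of "x + s *\<^sub>R h" x] by (simp add: mult_right_mono)
    also have "\<dots> = \<gamma> * s * (norm h)\<^sup>2"
      using s by (simp add: power2_eq_square)
    finally show "\<exists>d. (\<phi> has_real_derivative d) (at s) \<and> d \<le> 0"
      using \<phi>_deriv by force
  qed simp
  then show ?thesis unfolding \<phi>_def h_def by (simp add: inner_commute)
qed

lemma norm_le_abs_if_square_le:
  fixes x :: "'a::real_normed_vector"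
  assumes "(norm x)\<^sup>2 \<le> b\<^sup>2"
  shows "norm x \<le> \<bar>b\<bar>"
  using assms power2_le_imp_le[of "norm x" "\<bar>b\<bar>"] by simp

lemma norm_add_square_le:
  fixes a b :: "'a::real_inner"
  shows "(norm (a + b))\<^sup>2 \<le> 2 * (norm a)\<^sup>2 + 2 * (norm b)\<^sup>2"
proof -
  have "0 \<le> (norm (a - b))\<^sup>2" by simp
  then show ?thesis
    by (simp add: power2_norm_eq_inner inner_add_left inner_add_right inner_diff_left
        inner_diff_right inner_commute)
qed

lemma inner_le_half_sum_squares:
  fixes a b :: "'a::real_inner"
  shows "a \<bullet> b \<le> ((norm a)\<^sup>2 + (norm b)\<^sup>2) / 2"
proof -
  have "0 \<le> (norm (a - b))\<^sup>2" by simp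
  then show ?thesis
    by (simp add: power2_norm_eq_inner inner_diff_left inner_diff_right inner_commute)
qed

lemma biased_gradient_step_bound:
  fixes a g :: "'a::real_inner"
  assumes "0 \<le> \<eta>" "0 \<le> \<gamma>"
  shows "\<gamma> * \<eta>\<^sup>2 * (norm g)\<^sup>2
    \<le> \<eta> * (a \<bullet> g) - \<eta> / 2 * (1 - 4 * \<eta> * \<gamma>) * (norm a)\<^sup>2
      + (\<eta> / 2 + 2 * \<gamma> * \<eta>\<^sup>2) * (norm (a - g))\<^sup>2"
proof -
  have "\<eta> * (a \<bullet> (a - g)) \<le> \<eta> * (((norm a)\<^sup>2 + (norm (a - g))\<^sup>2) / 2)"
    using assms inner_le_half_sum_squares[of a "a - g"] by (intro mult_left_mono) auto
  moreover have "\<gamma> * \<eta>\<^sup>2 * (norm g)\<^sup>2 \<le> \<gamma> * \<eta>\<^sup>2 * (2 * (norm a)\<^sup>2 + 2 * (norm (a - g))\<^sup>2)"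
    using assms norm_add_square_le[of a "g - a"]
    by (intro mult_left_mono) (auto simp: norm_minus_commute)
  moreover have "a \<bullet> (a - g) = (norm a)\<^sup>2 - a \<bullet> g"
    by (simp add: inner_diff_right power2_norm_eq_inner)
  ultimately show ?thesis by (simp add: algebra_simps power2_eq_square)
qed

lemma square_sum_le_weighted:
  fixes a c :: "'i \<Rightarrow> real"
  assumes "finite I" "\<And>i. i \<in> I \<Longrightarrow> 0 < a i" "(\<Sum>i\<in>I. a i) = 1"
  shows "(\<Sum>i\<in>I. c i)\<^sup>2 \<le> (\<Sum>i\<in>I. (c i)\<^sup>2 / a i)"
proof -
  define s where "s = (\<Sum>i\<in>I. c i)"
  have "0 \<le> (\<Sum>i\<in>I. (c i - a i * s)\<^sup>2 / a i)"
    using assms by (intro sum_nonneg divide_nonneg_pos) auto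
  also have "\<dots> = (\<Sum>i\<in>I. (c i)\<^sup>2 / a i - 2 * s * c i + s\<^sup>2 * a i)"
  proof (rule sum.cong[OF refl])
    fix i assume "i \<in> I"
    then have "a i \<noteq> 0" using assms(2) by force
    then show "(c i - a i * s)\<^sup>2 / a i = (c i)\<^sup>2 / a i - 2 * s * c i + s\<^sup>2 * a i"
      by (simp add: field_simps power2_eq_square)
  qed
  also have "\<dots> = (\<Sum>i\<in>I. (c i)\<^sup>2 / a i) - s\<^sup>2"
    by (simp add: sum.distrib sum_subtractf flip: sum_distrib_left sum_distrib_right
        add: assms(3) s_def power2_eq_square)
  finally show ?thesis by (simp add: s_def)
qed

lemma norm_sum_scaleR_square_le:
  fixes x :: "'i \<Rightarrow> 'a::real_normed_vector"
  assumes "finite I" "\<And>i. i \<in> I \<Longrightarrow> 0 < a i" "(\<Sum>i\<in>I. a i) = 1"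
    and "\<And>i. i \<in> I \<Longrightarrow> norm (x i) \<le> K"
  shows "(norm (\<Sum>i\<in>I. c i *\<^sub>R x i))\<^sup>2 \<le> (\<Sum>i\<in>I. (c i)\<^sup>2 / a i) * K\<^sup>2"
proof -
  have "I \<noteq> {}" using assms(3) by auto
  then have "0 \<le> K" using assms(4) norm_ge_zero order_trans by blast
  have "norm (\<Sum>i\<in>I. c i *\<^sub>R x i) \<le> (\<Sum>i\<in>I. \<bar>c i\<bar> * K)"
    using assms(4) by (intro order_trans[OF norm_sum] sum_mono) (simp add: mult_left_mono)
  then have "(norm (\<Sum>i\<in>I. c i *\<^sub>R x i))\<^sup>2 \<le> ((\<Sum>i\<in>I. \<bar>c i\<bar>) * K)\<^sup>2"
    by (intro power_mono) (simp_all add: sum_distrib_right)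
  also have "\<dots> = (\<Sum>i\<in>I. \<bar>c i\<bar>)\<^sup>2 * K\<^sup>2"
    by (simp add: power_mult_distrib)
  also have "\<dots> \<le> (\<Sum>i\<in>I. (c i)\<^sup>2 / a i) * K\<^sup>2"
    using square_sum_le_weighted[OF assms(1-3), of "\<lambda>i. \<bar>c i\<bar>"] by (simp add: mult_right_mono)
  finally show ?thesis .
qed

lemma norm_convex_combination_le:
  fixes x :: "'i \<Rightarrow> 'a::real_normed_vector"
  assumes "\<And>i. i \<in> I \<Longrightarrow> 0 \<le> w i" "(\<Sum>i\<in>I. w i) = 1" "\<And>i. i \<in> I \<Longrightarrow> norm (x i) \<le> B"
  shows "norm (\<Sum>i\<in>I. w i *\<^sub>R x i) \<le> B"
proof -
  have "norm (\<Sum>i\<in>I. w i *\<^sub>R x i) \<le> (\<Sum>i\<in>I. w i * B)"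
    using assms by (intro order_trans[OF norm_sum] sum_mono) (simp add: mult_left_mono)
  then show ?thesis by (simp add: assms(2) flip: sum_distrib_right)
qed

section \<open>Telescoping a descent recursion\<close>

lemma Min_image_le_mean:
  fixes g :: "'i \<Rightarrow> real"
  assumes "finite I" "I \<noteq> {}"
  shows "Min (g ` I) \<le> (\<Sum>i\<in>I. g i) / card I"
proof -
  have "card I * Min (g ` I) \<le> (\<Sum>i\<in>I. g i)"
    using assms sum_mono[of I "\<lambda>_. Min (g ` I)" g] by simp
  moreover have "0 < real (card I)"
    using assms by (simp add: card_gt_0_iff)
  ultimately show ?thesis by (simp add: pos_le_divide_eq mult.commute)
qed

lemma Min_le_of_descent:
  fixes a g b h :: "nat \<Rightarrow> real"
  assumes "0 < c" "0 < T"
    and descent: "\<And>t. a (Suc t) \<le> a t - c * (g t - b t) + h t"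
    and lower: "\<And>t. a_min \<le> a t"
  shows "Min (g ` {..<T}) \<le> ((a 0 - a_min) / c + (\<Sum>t<T. b t + h t / c)) / T"
proof -
  have "g t \<le> (a t - a (Suc t)) / c + (b t + h t / c)" for t
  proof -
    have "(g t - b t) * c \<le> a t - a (Suc t) + h t"
      using descent[of t] by (simp add: mult.commute)
    then have "g t - b t \<le> (a t - a (Suc t) + h t) / c"
      using assms(1) by (simp add: pos_le_divide_eq)
    then show ?thesis by (simp add: add_divide_distrib)
  qed
  then have "(\<Sum>t<T. g t) \<le> (\<Sum>t<T. (a t - a (Suc t)) / c + (b t + h t / c))"
    by (rule sum_mono)
  also have "\<dots> = (a 0 - a T) / c + (\<Sum>t<T. b t + h t / c)"
    by (simp add: sum.distrib sum_lessThan_telescope' flip: sum_divide_distrib)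
  also have "\<dots> \<le> (a 0 - a_min) / c + (\<Sum>t<T. b t + h t / c)"
    using assms(1) lower[of T] by (simp add: divide_right_mono)
  finally have "(\<Sum>t<T. g t) / T \<le> ((a 0 - a_min) / c + (\<Sum>t<T. b t + h t / c)) / T"
    by (simp add: divide_right_mono)
  moreover have "Min (g ` {..<T}) \<le> (\<Sum>t<T. g t) / T"
    using Min_image_le_mean[of "{..<T}" g] assms(2) by (simp add: lessThan_empty_iff)
  ultimately show ?thesis by linarith
qed

lemma Min_le_of_biased_descent:
  fixes a g b e :: "nat \<Rightarrow> real" and \<eta> \<gamma> \<sigma> a_min :: real
  assumes "0 < \<eta>" "0 < \<gamma>" "0 < 1 - 4 * \<eta> * \<gamma>" "0 < T"
    and descent: "\<And>t. a (Suc t) \<le> a t - \<eta> / 2 * (1 - 4 * \<eta> * \<gamma>) * (g t - b t)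
        + ((\<eta> / 2 + 2 * \<gamma> * \<eta>\<^sup>2) * e t + \<gamma> * \<eta>\<^sup>2 * \<sigma>\<^sup>2)"
    and lower: "\<And>t. a_min \<le> a t"
    and b_nonneg: "\<And>t. 0 \<le> b t" and e_nonneg: "\<And>t. 0 \<le> e t"
  shows "Min (g ` {..<T})
    \<le> 2 / (\<eta> * (1 - 4 * \<eta> * \<gamma>) * real T) * (a 0 - a_min)
      + 2 * \<gamma> * \<eta> / (1 - 4 * \<eta> * \<gamma>) * \<sigma>\<^sup>2
      + (1 / real T) * (\<Sum>t<T. (1 / (\<gamma> * \<eta> * (1 - 4 * \<eta> * \<gamma>)) + 2) * (b t + e t))"
proof -
  define C where "C = 1 - 4 * \<eta> * \<gamma>"
  define k where "k = 1 / (\<gamma> * \<eta> * C) + 2"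
  define s where "s = 2 * \<gamma> * \<eta> / C * \<sigma>\<^sup>2"
  define h where "h t = (\<eta> / 2 + 2 * \<gamma> * \<eta>\<^sup>2) * e t + \<gamma> * \<eta>\<^sup>2 * \<sigma>\<^sup>2" for t
  have C: "0 < C" using assms(3) by (simp add: C_def)
  have "b t + h t / (\<eta> * C / 2) \<le> k * (b t + e t) + s" for t
  proof -
    have h_eq: "h t / (\<eta> * C / 2) = (1 + 4 * \<gamma> * \<eta>) / C * e t + s"
      using assms(1) C by (simp add: h_def s_def field_simps power2_eq_square)
    \<comment> \<open>\<open>k\<close> dominates \<open>(1 + 4\<gamma>\<eta>)/C\<close> because \<open>\<gamma>\<eta> < 1/4\<close>, so \<open>1/(\<gamma>\<eta>) > 4\<close>.\<close>
    have "1 + 4 * \<gamma> * \<eta> \<le> 1 / (\<gamma> * \<eta>) + 2 * C"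
    proof -
      have "4 < 1 / (\<gamma> * \<eta>)"
        using assms(1,2) C by (simp add: C_def field_simps)
      then show ?thesis using C by (simp add: C_def algebra_simps)
    qed
    then have "(1 + 4 * \<gamma> * \<eta>) / C \<le> k"
      using C by (simp add: k_def field_simps)
    then have "(1 + 4 * \<gamma> * \<eta>) / C * e t \<le> k * e t"
      using e_nonneg by (rule mult_right_mono)
    moreover have "b t \<le> k * b t"
      using b_nonneg[of t] assms(1,2) C by (simp add: k_def mult_le_cancel_right1)
    ultimately show ?thesis
      unfolding h_eq by (simp add: distrib_left)
  qed
  then have "(\<Sum>t<T. b t + h t / (\<eta> * C / 2)) \<le> (\<Sum>t<T. k * (b t + e t) + s)"
    by (rule sum_mono)
  also have "\<dots> = (\<Sum>t<T. k * (b t + e t)) + T * s"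
    by (simp add: sum.distrib)
  finally have sum_le: "(\<Sum>t<T. b t + h t / (\<eta> * C / 2)) \<le> (\<Sum>t<T. k * (b t + e t)) + T * s" .
  have "Min (g ` {..<T})
      \<le> ((a 0 - a_min) / (\<eta> * C / 2) + (\<Sum>t<T. b t + h t / (\<eta> * C / 2))) / T"
    using assms(1,4) C descent lower unfolding C_def h_def by (intro Min_le_of_descent) auto
  also have "\<dots> \<le> ((a 0 - a_min) / (\<eta> * C / 2) + ((\<Sum>t<T. k * (b t + e t)) + T * s)) / T"
    using sum_le by (intro divide_right_mono add_left_mono) auto
  also have "\<dots> = 2 / (\<eta> * C * T) * (a 0 - a_min) + s + (1 / T) * (\<Sum>t<T. k * (b t + e t))"
    using assms(1,4) C by (simp add: field_simps)
  finally show ?thesis by (simp add: C_def k_def s_def)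
qed

section \<open>Expectations under probability mass functions\<close>

lemma bounded_continuous_image:
  fixes f :: "'a::heine_borel \<Rightarrow> 'b::metric_space"
  assumes "continuous_on UNIV f" "bounded S"
  shows "bounded (f ` S)"
proof -
  have "compact (f ` closure S)"
    using assms by (intro compact_continuous_image continuous_on_subset[OF assms(1)]) auto
  then show ?thesis
    using closure_subset by (metis bounded_subset compact_imp_bounded image_mono)
qed

lemma integrable_measure_pmf_bounded:
  fixes f :: "'a \<Rightarrow> 'b::{banach, second_countable_topology}"
  assumes "bounded (f ` set_pmf M)"
  shows "integrable M f"
proof -
  obtain B where "\<forall>x\<in>set_pmf M. norm (f x) \<le> B"
    using assms by (auto simp: bounded_iff)
  then show ?thesis
    by (intro measure_pmf.integrable_const_bound[where B=B]) (auto simp: AE_measure_pmf_iff)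
qed

lemma expectation_bind_pmf:
  fixes f :: "'b \<Rightarrow> real"
  assumes "bounded (f ` set_pmf (bind_pmf M N))"
  shows "measure_pmf.expectation (bind_pmf M N) f
       = measure_pmf.expectation M (\<lambda>x. measure_pmf.expectation (N x) f)"
proof -
  obtain B where B: "\<forall>y\<in>set_pmf (bind_pmf M N). \<bar>f y\<bar> \<le> B"
    using assms by (auto simp: bounded_real)
  \<comment> \<open>The library rule for integrals over a bind needs a bound on all of the space,
    so f is first clipped to [-B, B], which changes nothing on the support.\<close>
  define g where "g y = max (- B) (min B (f y))" for y
  have fg: "g y = f y" if "y \<in> set_pmf (bind_pmf M N)" for y
    using B that by (force simp: g_def)
  have "measure_pmf.expectation (bind_pmf M N) f = measure_pmf.expectation (bind_pmf M N) g"
    by (intro integral_cong_AE) (auto simp: AE_measure_pmf_iff fg)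
  also have "\<dots> = (\<integral>x. measure_pmf.expectation (N x) g \<partial>measure_pmf M)"
    unfolding measure_pmf_bind
    by (rule integral_bind[where K="count_space UNIV" and B="\<bar>B\<bar>" and B'=1])
       (auto simp: g_def measurable_measure_pmf measure_pmf.finite_measure
             measure_pmf.emeasure_space_1 intro: measurable_space[OF measurable_measure_pmf[of N]])
  also have "\<dots> = measure_pmf.expectation M (\<lambda>x. measure_pmf.expectation (N x) f)"
    by (intro integral_cong_AE) (auto simp: AE_measure_pmf_iff intro!: integral_cong_AE fg bexI)
  finally show ?thesis .
qed

lemma abs_expectation_le:
  fixes f :: "'a \<Rightarrow> real"
  assumes "\<And>x. x \<in> set_pmf M \<Longrightarrow> \<bar>f x\<bar> \<le> B"
  shows "\<bar>measure_pmf.expectation M f\<bar> \<le> B"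
proof -
  have "bounded (f ` set_pmf M)"
    using assms by (auto simp: bounded_real)
  then have "integrable M f"
    by (rule integrable_measure_pmf_bounded)
  then have "measure_pmf.expectation M (\<lambda>x. \<bar>f x\<bar>) \<le> B"
    using assms by (intro measure_pmf.integral_le_const) (auto simp: AE_measure_pmf_iff)
  then show ?thesis
    using integral_abs_bound order_trans by blast
qed

lemma expectation_bind_pmf_le:
  fixes f h :: "'b \<Rightarrow> real"
  assumes "bounded (f ` set_pmf (bind_pmf M N))" "integrable M h"
    and "\<And>x. x \<in> set_pmf M \<Longrightarrow> measure_pmf.expectation (N x) f \<le> h x"
  shows "measure_pmf.expectation (bind_pmf M N) f \<le> measure_pmf.expectation M h"
proof -
  obtain B where B: "\<forall>y\<in>set_pmf (bind_pmf M N). \<bar>f y\<bar> \<le> B"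
    using assms(1) by (auto simp: bounded_real)
  then have "\<bar>measure_pmf.expectation (N x) f\<bar> \<le> B" if "x \<in> set_pmf M" for x
    using that by (intro abs_expectation_le) auto
  then have "integrable M (\<lambda>x. measure_pmf.expectation (N x) f)"
    by (intro integrable_measure_pmf_bounded) (auto simp: bounded_real)
  then show ?thesis
    unfolding expectation_bind_pmf[OF assms(1)]
    by (intro integral_mono_AE assms(2)) (auto simp: AE_measure_pmf_iff assms(3))
qed

lemma expectation_Pi_pmf_component:
  fixes h :: "'b \<Rightarrow> 'c::{banach, second_countable_topology}"
  assumes "finite A" "i \<in> A"
  shows "measure_pmf.expectation (Pi_pmf A d Q) (\<lambda>\<xi>. h (\<xi> i)) = measure_pmf.expectation (Q i) h"
proof -
  have "map_pmf (\<lambda>\<xi>. \<xi> i) (Pi_pmf A d Q) = Q i"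
    using Pi_pmf_component[OF assms(1), where x=i and dflt=d and p=Q] assms(2) by simp
  then show ?thesis
    using integral_map_pmf[of "\<lambda>\<xi>. \<xi> i" "Pi_pmf A d Q" h] by simp
qed

lemma integrable_Pi_pmf_component:
  fixes h :: "'b \<Rightarrow> 'c::{banach, second_countable_topology}" and Q :: "'a \<Rightarrow> 'b pmf"
  assumes "finite A" "i \<in> A" "integrable (Q i) h"
  shows "integrable (Pi_pmf A d Q) (\<lambda>\<xi>. h (\<xi> i))"
proof -
  have "map_pmf (\<lambda>\<xi>. \<xi> i) (Pi_pmf A d Q) = Q i"
    using Pi_pmf_component[OF assms(1), where x=i and dflt=d and p=Q] assms(2) by simp
  then show ?thesis
    using integrable_map_pmf_eq[of "\<lambda>\<xi>. \<xi> i" "Pi_pmf A d Q" h] assms(3) by simp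
qed

section \<open>Layer blocks\<close>

lemma lblock_add: "lblock layer l (a + b) = lblock layer l a + lblock layer l b"
  by (simp add: lblock_def vec_eq_iff)

lemma lblock_diff: "lblock layer l (a - b) = lblock layer l a - lblock layer l b"
  by (simp add: lblock_def vec_eq_iff)

lemma lblock_scaleR: "lblock layer l (c *\<^sub>R a) = c *\<^sub>R lblock layer l a"
  by (simp add: lblock_def vec_eq_iff)

lemma lblock_sum: "lblock layer l (\<Sum>i\<in>I. x i) = (\<Sum>i\<in>I. lblock layer l (x i))"
  by (simp add: lblock_def vec_eq_iff)

lemma norm_lblock_le: "norm (lblock layer l v) \<le> norm v"
  unfolding norm_le by (auto simp: lblock_def inner_vec_def intro!: sum_mono)

lemma bounded_linear_lblock: "bounded_linear (lblock layer l)"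
  by (rule bounded_linear_intro[where K=1]) (simp_all add: lblock_add lblock_scaleR norm_lblock_le)

lemma continuous_on_lblock [continuous_intros]:
  "continuous_on S g \<Longrightarrow> continuous_on S (\<lambda>x. lblock layer l (g x))"
  by (rule bounded_linear.continuous_on[OF bounded_linear_lblock])

lemma inner_lblock_neq: "l \<noteq> l' \<Longrightarrow> lblock layer l a \<bullet> lblock layer l' b = 0"
  by (simp add: lblock_def inner_vec_def, intro sum.neutral) auto

lemma inner_sum_lblock_disjoint:
  assumes "U \<inter> V = {}"
  shows "(\<Sum>l\<in>U. lblock layer l (x l)) \<bullet> (\<Sum>l\<in>V. lblock layer l (y l)) = 0"
  unfolding inner_sum_left inner_sum_right
  using assms by (intro sum.neutral ballI) (auto intro: inner_lblock_neq)

lemma sum_lblock_all_layers: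
  assumes "finite U" "\<forall>j. layer j \<in> U"
  shows "(\<Sum>l\<in>U. lblock layer l v) = v"
  using assms by (simp add: vec_eq_iff lblock_def)

lemma norm_sum_lblock_square:
  assumes "finite U"
  shows "(norm (\<Sum>l\<in>U. lblock layer l (y l)))\<^sup>2 = (\<Sum>l\<in>U. (norm (lblock layer l (y l)))\<^sup>2)"
  using assms
proof (induction U rule: finite_induct)
  case (insert l U)
  then have "lblock layer l (y l) \<bullet> (\<Sum>l'\<in>U. lblock layer l' (y l')) = 0"
    using inner_sum_lblock_disjoint[of "{l}" U] by auto
  then show ?case
    using insert by (simp add: power2_norm_eq_inner inner_add_left inner_add_right inner_commute)
qed simp

section \<open>Selective layer fine-tuning\<close>

locale selective_fl =
  fixes N L :: nat
    and layer :: "'p::finite \<Rightarrow> nat"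
    and F :: "nat \<Rightarrow> 'b \<Rightarrow> real^'p \<Rightarrow> real"
    and D :: "nat \<Rightarrow> 'b set"
    and Q :: "nat \<Rightarrow> 'b pmf"
    and S :: "nat \<Rightarrow> nat set"
    and Ls :: "nat \<Rightarrow> nat \<Rightarrow> nat set"
    and \<eta> \<gamma> \<sigma> :: real
    and \<sigma>l \<kappa> :: "nat \<Rightarrow> real"
    and \<theta>0 \<theta>s :: "real^'p"
  assumes N_pos: "N > 0"
    and layer_range: "\<forall>j. layer j \<in> {1..L}"
    and data: "\<forall>i\<in>{1..N}. finite (D i) \<and> D i \<noteq> {}"
    and S_sub: "\<forall>t. S t \<subseteq> {1..N}"
    and Ls_sub: "\<forall>t. \<forall>i\<in>S t. Ls t i \<subseteq> {1..L}"
    and diff: "\<forall>i\<in>{1..N}. \<forall>\<xi>\<in>D i \<union> set_pmf (Q i). \<forall>\<theta>. F i \<xi> differentiable (at \<theta>)"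
    and minimizer: "\<forall>\<theta>. fglob N F D \<theta>s \<le> fglob N F D \<theta>"
    and eta_pos: "\<eta> > 0"
    and gamma_pos: "\<gamma> > 0"
    and smooth: "\<forall>i\<in>{1..N}. \<forall>\<theta> \<theta>'.
        norm (grad (fobj F D i) \<theta> - grad (fobj F D i) \<theta>') \<le> \<gamma> * norm (\<theta> - \<theta>')"
    and unbiased: "\<forall>i\<in>{1..N}. \<forall>l\<in>{1..L}. \<forall>\<theta>.
        measure_pmf.expectation (Q i) (\<lambda>\<xi>. sgrad layer F i l \<theta> \<xi>)
          = lblock layer l (grad (fobj F D i) \<theta>)"
    and bounded_var: "\<forall>i\<in>{1..N}. \<forall>l\<in>{1..L}. \<forall>\<theta>. \<forall>\<xi>\<in>set_pmf (Q i).
        (norm (sgrad layer F i l \<theta> \<xi> - lblock layer l (grad (fobj F D i) \<theta>)))\<^sup>2 \<le> (\<sigma>l l)\<^sup>2"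
    and sigma_sum: "\<forall>t. (\<Sum>l\<in>Lsel S Ls t. (\<sigma>l l)\<^sup>2) \<le> \<sigma>\<^sup>2"
    and diversity: "\<forall>i\<in>{1..N}. \<forall>l\<in>{1..L}. \<forall>\<theta>.
        (norm (lblock layer l (grad (fglob N F D) \<theta>) - lblock layer l (grad (fobj F D i) \<theta>)))\<^sup>2
          \<le> (\<kappa> l)\<^sup>2"
begin

abbreviation obj where "obj \<equiv> fglob N F D"
abbreviation grad_obj where "grad_obj \<equiv> grad obj"
abbreviation grad_loc where "grad_loc i \<equiv> grad (fobj F D i)"
abbreviation \<alpha> where "\<alpha> \<equiv> alpha N D"
abbreviation weight where "weight \<equiv> wgt D S Ls"
abbreviation sel_layers where "sel_layers \<equiv> Lsel S Ls"
abbreviation batches where "batches t \<equiv> Pi_pmf (S t) undefined Q"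
abbreviation iterate where "iterate t \<equiv> traj N layer F D S Ls Q \<eta> \<theta>0 t"

lemma card_data_pos: "i \<in> {1..N} \<Longrightarrow> 0 < real (card (D i))"
  using data by (auto simp: card_gt_0_iff)

lemma alpha_pos: "i \<in> {1..N} \<Longrightarrow> 0 < \<alpha> i"
  using card_data_pos by (auto simp: alpha_def intro!: divide_pos_pos sum_pos2[of _ i])

lemma sum_alpha: "(\<Sum>i\<in>{1..N}. \<alpha> i) = 1"
proof -
  have "0 < (\<Sum>j\<in>{1..N}. real (card (D j)))"
    using N_pos card_data_pos by (intro sum_pos2[of _ 1]) auto
  then show ?thesis by (simp add: alpha_def flip: sum_divide_distrib)
qed

lemma GDERIV_fobj: "i \<in> {1..N} \<Longrightarrow> GDERIV (fobj F D i) \<theta> :> grad_loc i \<theta>"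
proof -
  assume i: "i \<in> {1..N}"
  have "GDERIV (fobj F D i) \<theta> :> (1 / real (card (D i))) *\<^sub>R (\<Sum>\<xi>\<in>D i. grad (F i \<xi>) \<theta>)"
    unfolding fobj_def[abs_def] using i data diff
    by (intro GDERIV_cmult GDERIV_sum GDERIV_grad) auto
  then show ?thesis using grad_eqI by metis
qed

lemma grad_obj_eq: "grad_obj \<theta> = (\<Sum>i\<in>{1..N}. \<alpha> i *\<^sub>R grad_loc i \<theta>)"
  and GDERIV_obj: "GDERIV obj \<theta> :> grad_obj \<theta>"
proof -
  have "GDERIV obj \<theta> :> (\<Sum>i\<in>{1..N}. \<alpha> i *\<^sub>R grad_loc i \<theta>)"
    unfolding fglob_def[abs_def] by (intro GDERIV_cmult GDERIV_sum GDERIV_fobj) auto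
  then show "grad_obj \<theta> = (\<Sum>i\<in>{1..N}. \<alpha> i *\<^sub>R grad_loc i \<theta>)" "GDERIV obj \<theta> :> grad_obj \<theta>"
    using grad_eqI by metis+
qed

lemma lipschitz_grad_loc: "i \<in> {1..N} \<Longrightarrow> \<gamma>-lipschitz_on UNIV (grad_loc i)"
  using smooth gamma_pos by (intro lipschitz_onI) (auto simp: dist_norm)

lemma lipschitz_grad_obj: "\<gamma>-lipschitz_on UNIV grad_obj"
proof (rule lipschitz_onI)
  fix x y
  have "norm (grad_obj x - grad_obj y) = norm (\<Sum>i\<in>{1..N}. \<alpha> i *\<^sub>R (grad_loc i x - grad_loc i y))"
    by (simp add: grad_obj_eq sum_subtractf scaleR_diff_right)
  also have "\<dots> \<le> (\<Sum>i\<in>{1..N}. \<alpha> i * (\<gamma> * norm (x - y)))"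
    using alpha_pos smooth
    by (intro order_trans[OF norm_sum] sum_mono) (auto intro!: mult_left_mono simp: less_imp_le)
  also have "\<dots> = \<gamma> * norm (x - y)"
    using sum_alpha by (simp flip: sum_distrib_right)
  finally show "dist (grad_obj x) (grad_obj y) \<le> \<gamma> * dist x y"
    by (simp add: dist_norm)
qed (use gamma_pos in simp)

lemma obj_quadratic_bound: "obj y \<le> obj x + grad_obj x \<bullet> (y - x) + \<gamma> / 2 * (norm (y - x))\<^sup>2"
  by (rule lipschitz_gradient_quadratic_bound[OF GDERIV_obj lipschitz_grad_obj])

lemma continuous_obj: "continuous_on UNIV obj"
proof -
  have "isCont obj \<theta>" for \<theta>
    using GDERIV_obj[of \<theta>] unfolding gderiv_def by (rule has_derivative_continuous)
  then show ?thesis by (simp add: continuous_at_imp_continuous_on)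
qed

lemma continuous_grad_obj: "continuous_on UNIV grad_obj"
  by (rule lipschitz_on_continuous_on[OF lipschitz_grad_obj])

lemma continuous_grad_loc: "i \<in> {1..N} \<Longrightarrow> continuous_on UNIV (grad_loc i)"
  by (rule lipschitz_on_continuous_on[OF lipschitz_grad_loc])

lemma finite_S: "finite (S t)"
  using S_sub finite_subset by blast

lemma sel_layers_sub: "sel_layers t \<subseteq> {1..L}"
  using Ls_sub by (auto simp: Lsel_def)

lemma finite_sel_layers: "finite (sel_layers t)"
  using sel_layers_sub finite_subset by blast

lemma client_range: "i \<in> S t \<Longrightarrow> i \<in> {1..N}"
  using S_sub by blast

lemma sel_layer_range: "l \<in> sel_layers t \<Longrightarrow> l \<in> {1..L}"
  using sel_layers_sub by blast

lemma weight_nonneg: "0 \<le> weight t i l"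
  by (simp add: wgt_def sum_nonneg)

lemma sum_weight: "l \<in> sel_layers t \<Longrightarrow> (\<Sum>i\<in>S t. weight t i l) = 1"
proof -
  assume "l \<in> sel_layers t"
  then obtain j where j: "j \<in> S t" "l \<in> Ls t j" by (auto simp: Lsel_def)
  define J where "J = {j\<in>S t. l \<in> Ls t j}"
  have "j \<in> {1..N}" using j(1) S_sub by blast
  then have "0 < (\<Sum>j\<in>J. real (card (D j)))"
    using j finite_S card_data_pos by (intro sum_pos2[of _ j]) (auto simp: J_def)
  moreover have "(\<Sum>i\<in>S t. weight t i l) = (\<Sum>i\<in>J. real (card (D i)) / (\<Sum>j\<in>J. real (card (D j))))"
    unfolding J_def wgt_def using finite_S by (simp add: sum.inter_filter[symmetric])
  ultimately show ?thesis by (simp flip: sum_divide_distrib)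
qed

lemma sum_weight_clients:
  fixes x :: "nat \<Rightarrow> 'a::real_vector"
  shows "(\<Sum>i\<in>{1..N}. weight t i l *\<^sub>R x i) = (\<Sum>i\<in>S t. weight t i l *\<^sub>R x i)"
  using S_sub by (intro sum.mono_neutral_right) (auto simp: wgt_def)

text \<open>In the paper's notation \<open>\<E>\<^sub>t\<^sub>,\<^sub>1\<close> is the expectation of
  \<open>(norm (unsel_grad t \<theta>))\<^sup>2\<close> over the \<open>t\<close>-th iterate and \<open>\<E>\<^sub>t\<^sub>,\<^sub>2 = div_error t\<close>.\<close>

definition sel_grad :: "nat \<Rightarrow> real^'p \<Rightarrow> real^'p" where
  "sel_grad t \<theta> = (\<Sum>l\<in>sel_layers t. lblock layer l (grad_obj \<theta>))"

definition unsel_grad :: "nat \<Rightarrow> real^'p \<Rightarrow> real^'p" where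
  "unsel_grad t \<theta> = (\<Sum>l\<in>{1..L} - sel_layers t. lblock layer l (grad_obj \<theta>))"

definition mean_update :: "nat \<Rightarrow> real^'p \<Rightarrow> real^'p" where
  "mean_update t \<theta> = (\<Sum>l\<in>sel_layers t. \<Sum>i\<in>S t. weight t i l *\<^sub>R lblock layer l (grad_loc i \<theta>))"

definition update :: "nat \<Rightarrow> real^'p \<Rightarrow> (nat \<Rightarrow> 'b) \<Rightarrow> real^'p" where
  "update t \<theta> \<xi> = (\<Sum>l\<in>sel_layers t. \<Sum>i\<in>S t. weight t i l *\<^sub>R sgrad layer F i l \<theta> (\<xi> i))"

definition div_error :: "nat \<Rightarrow> real" where
  "div_error t = (\<Sum>l\<in>sel_layers t. chi2 N D S Ls t l * (\<kappa> l)\<^sup>2)"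

lemma mean_update_eq: "mean_update t \<theta>
    = (\<Sum>l\<in>sel_layers t. lblock layer l (\<Sum>i\<in>S t. weight t i l *\<^sub>R grad_loc i \<theta>))"
  by (simp add: mean_update_def lblock_sum lblock_scaleR)

lemma update_minus_mean_eq: "update t \<theta> \<xi> - mean_update t \<theta>
    = (\<Sum>l\<in>sel_layers t. lblock layer l
         (\<Sum>i\<in>S t. weight t i l *\<^sub>R (grad (F i (\<xi> i)) \<theta> - grad_loc i \<theta>)))"
  by (simp add: update_def mean_update_def sgrad_def lblock_sum lblock_scaleR lblock_diff
      sum_subtractf scaleR_diff_right)

lemma sel_minus_mean_eq: "sel_grad t \<theta> - mean_update t \<theta>
    = (\<Sum>l\<in>sel_layers t. lblock layer l (grad_obj \<theta> - (\<Sum>i\<in>S t. weight t i l *\<^sub>R grad_loc i \<theta>)))"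
  by (simp add: sel_grad_def mean_update_eq lblock_diff sum_subtractf)

lemma sel_plus_unsel: "sel_grad t \<theta> + unsel_grad t \<theta> = grad_obj \<theta>"
proof -
  have "sel_grad t \<theta> + unsel_grad t \<theta> = (\<Sum>l\<in>{1..L}. lblock layer l (grad_obj \<theta>))"
    unfolding sel_grad_def unsel_grad_def
    by (metis sum.subset_diff[OF sel_layers_sub[of t] finite_atLeastAtMost] add.commute)
  also have "\<dots> = grad_obj \<theta>"
    using layer_range by (intro sum_lblock_all_layers) auto
  finally show ?thesis .
qed

lemma inner_unsel_sel_layers:
  "unsel_grad t \<theta> \<bullet> (\<Sum>l\<in>sel_layers t. lblock layer l (y l)) = 0"
  unfolding unsel_grad_def by (rule inner_sum_lblock_disjoint) auto

lemma norm_grad_obj_square: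
  "(norm (grad_obj \<theta>))\<^sup>2 = (norm (sel_grad t \<theta>))\<^sup>2 + (norm (unsel_grad t \<theta>))\<^sup>2"
proof -
  have "unsel_grad t \<theta> \<bullet> sel_grad t \<theta> = 0"
    unfolding sel_grad_def by (rule inner_unsel_sel_layers)
  then show ?thesis
    unfolding sel_plus_unsel[of t \<theta>, symmetric] power2_norm_eq_inner
    by (simp add: inner_add_left inner_add_right inner_commute)
qed

lemma norm_layer_bias_square_le:
  assumes l: "l \<in> sel_layers t"
  shows "(norm (lblock layer l (grad_obj \<theta> - (\<Sum>i\<in>S t. weight t i l *\<^sub>R grad_loc i \<theta>))))\<^sup>2
    \<le> chi2 N D S Ls t l * (\<kappa> l)\<^sup>2"
proof -
  have lL: "l \<in> {1..L}" using l by (rule sel_layer_range)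
  define y where "y = lblock layer l (grad_obj \<theta>)"
  define x where "x i = lblock layer l (grad_loc i \<theta>)" for i
  have sum_w: "(\<Sum>i\<in>{1..N}. weight t i l) = 1"
    using sum_weight_clients[of t l "\<lambda>_. 1::real"] sum_weight[OF l] by simp
  have y_eq: "y = (\<Sum>i\<in>{1..N}. \<alpha> i *\<^sub>R x i)"
    by (simp add: y_def x_def grad_obj_eq lblock_sum lblock_scaleR)
  \<comment> \<open>Both weight vectors sum to one, so the bias is a zero-sum combination of the
    per-client deviations, each of norm at most \<open>\<kappa> l\<close>.\<close>
  have "(\<Sum>i\<in>{1..N}. (weight t i l - \<alpha> i) *\<^sub>R (y - x i))
      = (\<Sum>i\<in>{1..N}. weight t i l - \<alpha> i) *\<^sub>R y
        - (\<Sum>i\<in>{1..N}. weight t i l *\<^sub>R x i) + (\<Sum>i\<in>{1..N}. \<alpha> i *\<^sub>R x i)"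
    by (simp add: scaleR_diff_left scaleR_diff_right sum_subtractf scaleR_sum_left)
  also have "\<dots> = y - (\<Sum>i\<in>S t. weight t i l *\<^sub>R x i)"
    using sum_w sum_alpha y_eq sum_weight_clients[of t l x] by (simp add: sum_subtractf)
  also have "\<dots> = lblock layer l (grad_obj \<theta> - (\<Sum>i\<in>S t. weight t i l *\<^sub>R grad_loc i \<theta>))"
    by (simp add: y_def x_def lblock_diff lblock_sum lblock_scaleR)
  finally have bias_eq: "lblock layer l (grad_obj \<theta> - (\<Sum>i\<in>S t. weight t i l *\<^sub>R grad_loc i \<theta>))
      = (\<Sum>i\<in>{1..N}. (weight t i l - \<alpha> i) *\<^sub>R (y - x i))" ..
  have "(norm (\<Sum>i\<in>{1..N}. (weight t i l - \<alpha> i) *\<^sub>R (y - x i)))\<^sup>2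
      \<le> (\<Sum>i\<in>{1..N}. (weight t i l - \<alpha> i)\<^sup>2 / \<alpha> i) * \<bar>\<kappa> l\<bar>\<^sup>2"
  proof (rule norm_sum_scaleR_square_le)
    fix i assume "i \<in> {1..N}"
    then have "(norm (y - x i))\<^sup>2 \<le> (\<kappa> l)\<^sup>2"
      using diversity lL by (simp add: x_def y_def)
    then show "norm (y - x i) \<le> \<bar>\<kappa> l\<bar>"
      by (rule norm_le_abs_if_square_le)
  qed (rule finite_atLeastAtMost, erule alpha_pos, rule sum_alpha)
  then show ?thesis
    unfolding bias_eq chi2_def power2_abs .
qed

lemma bias_bound: "(norm (sel_grad t \<theta> - mean_update t \<theta>))\<^sup>2 \<le> div_error t"
  unfolding sel_minus_mean_eq norm_sum_lblock_square[OF finite_sel_layers] div_error_def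
  by (intro sum_mono norm_layer_bias_square_le)

lemma div_error_nonneg: "0 \<le> div_error t"
  unfolding div_error_def chi2_def
  using alpha_pos by (intro sum_nonneg mult_nonneg_nonneg divide_nonneg_pos) auto

lemma batch_in_support:
  "\<xi> \<in> set_pmf (batches t) \<Longrightarrow> i \<in> S t \<Longrightarrow> \<xi> i \<in> set_pmf (Q i)"
  using set_Pi_pmf[OF finite_S, of t undefined Q] by (auto simp: PiE_dflt_def)

lemma norm_sgrad_noise_le:
  assumes "i \<in> {1..N}" "l \<in> {1..L}" "\<xi> \<in> set_pmf (Q i)"
  shows "norm (sgrad layer F i l \<theta> \<xi> - lblock layer l (grad_loc i \<theta>)) \<le> \<bar>\<sigma>l l\<bar>"
  using bounded_var assms by (intro norm_le_abs_if_square_le) blast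

lemma noise_bound:
  assumes "\<xi> \<in> set_pmf (batches t)"
  shows "(norm (update t \<theta> \<xi> - mean_update t \<theta>))\<^sup>2 \<le> \<sigma>\<^sup>2"
proof -
  have "(norm (lblock layer l (\<Sum>i\<in>S t. weight t i l *\<^sub>R (grad (F i (\<xi> i)) \<theta> - grad_loc i \<theta>))))\<^sup>2
      \<le> (\<sigma>l l)\<^sup>2" if l: "l \<in> sel_layers t" for l
  proof -
    have "lblock layer l (\<Sum>i\<in>S t. weight t i l *\<^sub>R (grad (F i (\<xi> i)) \<theta> - grad_loc i \<theta>))
        = (\<Sum>i\<in>S t. weight t i l *\<^sub>R (sgrad layer F i l \<theta> (\<xi> i) - lblock layer l (grad_loc i \<theta>)))"
      by (simp add: sgrad_def lblock_sum lblock_scaleR lblock_diff)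
    moreover have "norm (\<Sum>i\<in>S t. weight t i l *\<^sub>R
        (sgrad layer F i l \<theta> (\<xi> i) - lblock layer l (grad_loc i \<theta>))) \<le> \<bar>\<sigma>l l\<bar>"
      using l assms
      by (intro norm_convex_combination_le weight_nonneg sum_weight norm_sgrad_noise_le
          batch_in_support client_range sel_layer_range)
    ultimately show ?thesis
      by (simp flip: abs_le_square_iff)
  qed
  then have "(norm (update t \<theta> \<xi> - mean_update t \<theta>))\<^sup>2 \<le> (\<Sum>l\<in>sel_layers t. (\<sigma>l l)\<^sup>2)"
    unfolding update_minus_mean_eq norm_sum_lblock_square[OF finite_sel_layers]
    by (rule sum_mono)
  then show ?thesis
    using sigma_sum order_trans by blast
qed

lemma norm_update_le: "\<xi> \<in> set_pmf (batches t) \<Longrightarrow> norm (update t \<theta> \<xi> - mean_update t \<theta>) \<le> \<bar>\<sigma>\<bar>"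
  using noise_bound by (intro norm_le_abs_if_square_le)

lemma bounded_update: "bounded (update t \<theta> ` set_pmf (batches t))"
  using norm_update_le
  by (intro bounded_subset[OF bounded_cball[of "mean_update t \<theta>" "\<bar>\<sigma>\<bar>"]])
    (auto simp: dist_norm norm_minus_commute)

lemma expectation_update: "measure_pmf.expectation (batches t) (update t \<theta>) = mean_update t \<theta>"
proof -
  have int: "integrable (batches t) (\<lambda>\<xi>. sgrad layer F i l \<theta> (\<xi> i))"
    and exp: "measure_pmf.expectation (batches t) (\<lambda>\<xi>. sgrad layer F i l \<theta> (\<xi> i))
      = lblock layer l (grad_loc i \<theta>)"
    if "l \<in> sel_layers t" "i \<in> S t" for i l
  proof -
    have iN: "i \<in> {1..N}" and lL: "l \<in> {1..L}"
      using that S_sub sel_layers_sub by blast+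
    have "bounded ((\<lambda>\<xi>. sgrad layer F i l \<theta> \<xi>) ` set_pmf (Q i))"
      using norm_sgrad_noise_le[OF iN lL]
      by (intro bounded_subset[OF bounded_cball[of "lblock layer l (grad_loc i \<theta>)" "\<bar>\<sigma>l l\<bar>"]])
        (auto simp: dist_norm norm_minus_commute)
    then show "integrable (batches t) (\<lambda>\<xi>. sgrad layer F i l \<theta> (\<xi> i))"
      by (intro integrable_Pi_pmf_component finite_S that integrable_measure_pmf_bounded)
    show "measure_pmf.expectation (batches t) (\<lambda>\<xi>. sgrad layer F i l \<theta> (\<xi> i))
        = lblock layer l (grad_loc i \<theta>)"
      using unbiased iN lL by (simp add: expectation_Pi_pmf_component[OF finite_S that(2)])
  qed
  have "measure_pmf.expectation (batches t) (update t \<theta>)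
      = (\<Sum>l\<in>sel_layers t. \<Sum>i\<in>S t. weight t i l *\<^sub>R
           measure_pmf.expectation (batches t) (\<lambda>\<xi>. sgrad layer F i l \<theta> (\<xi> i)))"
    unfolding update_def[abs_def] using int
    by (simp add: Bochner_Integration.integral_sum Bochner_Integration.integrable_sum)
  then show ?thesis
    by (simp add: exp mean_update_def)
qed

lemma obj_step_le:
  assumes "\<xi> \<in> set_pmf (batches t)"
  shows "obj (\<theta> - \<eta> *\<^sub>R update t \<theta> \<xi>)
    \<le> obj \<theta> - \<eta> * (grad_obj \<theta> \<bullet> update t \<theta> \<xi>)
      + (\<gamma> * \<eta>\<^sup>2 * (norm (mean_update t \<theta>))\<^sup>2 + \<gamma> * \<eta>\<^sup>2 * \<sigma>\<^sup>2)"
proof -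
  have "(norm (update t \<theta> \<xi>))\<^sup>2
      \<le> 2 * (norm (mean_update t \<theta>))\<^sup>2 + 2 * (norm (update t \<theta> \<xi> - mean_update t \<theta>))\<^sup>2"
    using norm_add_square_le[of "mean_update t \<theta>" "update t \<theta> \<xi> - mean_update t \<theta>"] by simp
  also have "\<dots> \<le> 2 * (norm (mean_update t \<theta>))\<^sup>2 + 2 * \<sigma>\<^sup>2"
    using noise_bound[OF assms] by simp
  finally have "\<gamma> / 2 * \<eta>\<^sup>2 * (norm (update t \<theta> \<xi>))\<^sup>2
      \<le> \<gamma> / 2 * \<eta>\<^sup>2 * (2 * (norm (mean_update t \<theta>))\<^sup>2 + 2 * \<sigma>\<^sup>2)"
    using gamma_pos by (intro mult_left_mono) auto
  also have "\<dots> = \<gamma> * \<eta>\<^sup>2 * (norm (mean_update t \<theta>))\<^sup>2 + \<gamma> * \<eta>\<^sup>2 * \<sigma>\<^sup>2"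
    by (simp add: algebra_simps)
  finally have "\<gamma> / 2 * \<eta>\<^sup>2 * (norm (update t \<theta> \<xi>))\<^sup>2
      \<le> \<gamma> * \<eta>\<^sup>2 * (norm (mean_update t \<theta>))\<^sup>2 + \<gamma> * \<eta>\<^sup>2 * \<sigma>\<^sup>2" .
  moreover have "obj (\<theta> - \<eta> *\<^sub>R update t \<theta> \<xi>)
      \<le> obj \<theta> - \<eta> * (grad_obj \<theta> \<bullet> update t \<theta> \<xi>) + \<gamma> / 2 * \<eta>\<^sup>2 * (norm (update t \<theta> \<xi>))\<^sup>2"
    using obj_quadratic_bound[of "\<theta> - \<eta> *\<^sub>R update t \<theta> \<xi>" \<theta>] eta_pos
    by (simp add: power_mult_distrib mult_ac)
  ultimately show ?thesis by linarith
qed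

lemma expected_obj_step_le:
  "measure_pmf.expectation (batches t) (\<lambda>\<xi>. obj (\<theta> - \<eta> *\<^sub>R update t \<theta> \<xi>))
    \<le> obj \<theta> - \<eta> / 2 * (1 - 4 * \<eta> * \<gamma>) * ((norm (grad_obj \<theta>))\<^sup>2 - (norm (unsel_grad t \<theta>))\<^sup>2)
      + ((\<eta> / 2 + 2 * \<gamma> * \<eta>\<^sup>2) * div_error t + \<gamma> * \<eta>\<^sup>2 * \<sigma>\<^sup>2)"
proof -
  define c where "c = \<gamma> * \<eta>\<^sup>2 * (norm (mean_update t \<theta>))\<^sup>2 + \<gamma> * \<eta>\<^sup>2 * \<sigma>\<^sup>2"
  have int_update: "integrable (batches t) (update t \<theta>)"
    by (rule integrable_measure_pmf_bounded[OF bounded_update])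
  have "continuous_on UNIV (\<lambda>v. obj (\<theta> - \<eta> *\<^sub>R v))"
    by (intro continuous_on_compose2[OF continuous_obj] continuous_intros) auto
  then have "bounded ((\<lambda>v. obj (\<theta> - \<eta> *\<^sub>R v)) ` update t \<theta> ` set_pmf (batches t))"
    using bounded_update by (rule bounded_continuous_image)
  then have int_lhs: "integrable (batches t) (\<lambda>\<xi>. obj (\<theta> - \<eta> *\<^sub>R update t \<theta> \<xi>))"
    by (intro integrable_measure_pmf_bounded) (simp add: image_image)
  have int_rhs: "integrable (batches t) (\<lambda>\<xi>. obj \<theta> - \<eta> * (grad_obj \<theta> \<bullet> update t \<theta> \<xi>) + c)"
    by (intro Bochner_Integration.integrable_add Bochner_Integration.integrable_diff
        integrable_mult_right integrable_inner_right int_update measure_pmf.integrable_const)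
  have "measure_pmf.expectation (batches t) (\<lambda>\<xi>. obj (\<theta> - \<eta> *\<^sub>R update t \<theta> \<xi>))
      \<le> measure_pmf.expectation (batches t) (\<lambda>\<xi>. obj \<theta> - \<eta> * (grad_obj \<theta> \<bullet> update t \<theta> \<xi>) + c)"
    using obj_step_le
    by (intro integral_mono_AE[OF int_lhs int_rhs]) (auto simp: AE_measure_pmf_iff c_def)
  also have "\<dots> = obj \<theta> - \<eta> * (grad_obj \<theta> \<bullet> mean_update t \<theta>) + c"
    using int_update by (simp add: expectation_update)
  \<comment> \<open>Only the selected part of the gradient sees the update; the bias of the update is then
    controlled by completing squares.\<close>
  also have "grad_obj \<theta> \<bullet> mean_update t \<theta> = sel_grad t \<theta> \<bullet> mean_update t \<theta>"
  proof -
    have "unsel_grad t \<theta> \<bullet> mean_update t \<theta> = 0"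
      unfolding mean_update_eq by (rule inner_unsel_sel_layers)
    then show ?thesis
      by (simp add: inner_add_left flip: sel_plus_unsel[of t \<theta>])
  qed
  finally have "measure_pmf.expectation (batches t) (\<lambda>\<xi>. obj (\<theta> - \<eta> *\<^sub>R update t \<theta> \<xi>))
      \<le> obj \<theta> - \<eta> * (sel_grad t \<theta> \<bullet> mean_update t \<theta>) + c" .
  moreover have "\<gamma> * \<eta>\<^sup>2 * (norm (mean_update t \<theta>))\<^sup>2
      \<le> \<eta> * (sel_grad t \<theta> \<bullet> mean_update t \<theta>) - \<eta> / 2 * (1 - 4 * \<eta> * \<gamma>) * (norm (sel_grad t \<theta>))\<^sup>2
        + (\<eta> / 2 + 2 * \<gamma> * \<eta>\<^sup>2) * (norm (sel_grad t \<theta> - mean_update t \<theta>))\<^sup>2"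
    using eta_pos gamma_pos by (intro biased_gradient_step_bound) auto
  moreover have "(\<eta> / 2 + 2 * \<gamma> * \<eta>\<^sup>2) * (norm (sel_grad t \<theta> - mean_update t \<theta>))\<^sup>2
      \<le> (\<eta> / 2 + 2 * \<gamma> * \<eta>\<^sup>2) * div_error t"
    using bias_bound eta_pos gamma_pos by (intro mult_left_mono) auto
  moreover have "\<eta> / 2 * (1 - 4 * \<eta> * \<gamma>) * ((norm (grad_obj \<theta>))\<^sup>2 - (norm (unsel_grad t \<theta>))\<^sup>2)
      = \<eta> / 2 * (1 - 4 * \<eta> * \<gamma>) * (norm (sel_grad t \<theta>))\<^sup>2"
    using norm_grad_obj_square[of \<theta> t] by simp
  ultimately show ?thesis
    unfolding c_def by linarith
qed

lemma iterate_Suc: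
  "iterate (Suc t) = bind_pmf (iterate t) (\<lambda>\<theta>. map_pmf (\<lambda>\<xi>. \<theta> - \<eta> *\<^sub>R update t \<theta> \<xi>) (batches t))"
  by (simp add: update_def)

lemma continuous_mean_update: "continuous_on UNIV (mean_update t)"
  unfolding mean_update_def[abs_def]
  using continuous_grad_loc client_range by (intro continuous_intros) auto

lemma bounded_iterate: "bounded (set_pmf (iterate t))"
proof (induction t)
  case (Suc t)
  obtain R where R: "\<forall>\<theta>\<in>set_pmf (iterate t). norm \<theta> \<le> R"
    using Suc by (auto simp: bounded_iff)
  obtain M where M: "\<forall>\<theta>\<in>set_pmf (iterate t). norm (mean_update t \<theta>) \<le> M"
    using bounded_continuous_image[OF continuous_mean_update Suc] by (auto simp: bounded_iff)
  have "norm (\<theta> - \<eta> *\<^sub>R update t \<theta> \<xi>) \<le> R + \<eta> * (M + \<bar>\<sigma>\<bar>)"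
    if "\<theta> \<in> set_pmf (iterate t)" "\<xi> \<in> set_pmf (batches t)" for \<theta> \<xi>
  proof -
    have "norm (mean_update t \<theta>) \<le> M"
      using M that(1) by blast
    then have "norm (update t \<theta> \<xi>) \<le> M + \<bar>\<sigma>\<bar>"
      using norm_triangle_sub[of "update t \<theta> \<xi>" "mean_update t \<theta>"] norm_update_le[OF that(2), of \<theta>]
      by linarith
    then have "\<eta> * norm (update t \<theta> \<xi>) \<le> \<eta> * (M + \<bar>\<sigma>\<bar>)"
      using eta_pos by (intro mult_left_mono) auto
    moreover have "norm (\<eta> *\<^sub>R update t \<theta> \<xi>) = \<eta> * norm (update t \<theta> \<xi>)"
      using eta_pos by simp
    moreover have "norm \<theta> \<le> R"
      using R that(1) by blast
    ultimately show ?thesis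
      using norm_triangle_ineq4[of \<theta> "\<eta> *\<^sub>R update t \<theta> \<xi>"] by linarith
  qed
  then show ?case
    unfolding iterate_Suc by (auto simp: bounded_iff)
qed simp

lemma integrable_iterate:
  fixes u :: "real^'p \<Rightarrow> real"
  assumes "continuous_on UNIV u"
  shows "integrable (iterate t) u"
  using bounded_continuous_image[OF assms bounded_iterate] by (rule integrable_measure_pmf_bounded)

lemma obj_min_le_expectation: "obj \<theta>s \<le> measure_pmf.expectation (iterate t) obj"
  using minimizer integrable_iterate[OF continuous_obj]
  by (intro measure_pmf.integral_ge_const) (auto simp: AE_measure_pmf_iff)

lemma expected_descent:
  "measure_pmf.expectation (iterate (Suc t)) obj
    \<le> measure_pmf.expectation (iterate t) obj
      - \<eta> / 2 * (1 - 4 * \<eta> * \<gamma>) * (measure_pmf.expectation (iterate t) (\<lambda>\<theta>. (norm (grad_obj \<theta>))\<^sup>2)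
        - measure_pmf.expectation (iterate t) (\<lambda>\<theta>. (norm (unsel_grad t \<theta>))\<^sup>2))
      + ((\<eta> / 2 + 2 * \<gamma> * \<eta>\<^sup>2) * div_error t + \<gamma> * \<eta>\<^sup>2 * \<sigma>\<^sup>2)"
proof -
  define K where "K = (\<eta> / 2 + 2 * \<gamma> * \<eta>\<^sup>2) * div_error t + \<gamma> * \<eta>\<^sup>2 * \<sigma>\<^sup>2"
  define c where "c = \<eta> / 2 * (1 - 4 * \<eta> * \<gamma>)"
  have int_obj: "integrable (iterate t) obj"
    by (rule integrable_iterate[OF continuous_obj])
  have int_grad: "integrable (iterate t) (\<lambda>\<theta>. (norm (grad_obj \<theta>))\<^sup>2)"
    using continuous_grad_obj by (intro integrable_iterate continuous_intros)
  have int_unsel: "integrable (iterate t) (\<lambda>\<theta>. (norm (unsel_grad t \<theta>))\<^sup>2)"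
    unfolding unsel_grad_def using continuous_grad_obj
    by (intro integrable_iterate continuous_intros)
  have "bounded (obj ` set_pmf (iterate (Suc t)))"
    by (rule bounded_continuous_image[OF continuous_obj bounded_iterate])
  then have "measure_pmf.expectation (iterate (Suc t)) obj
      \<le> measure_pmf.expectation (iterate t)
          (\<lambda>\<theta>. obj \<theta> - c * ((norm (grad_obj \<theta>))\<^sup>2 - (norm (unsel_grad t \<theta>))\<^sup>2) + K)"
    unfolding iterate_Suc
    using int_obj int_grad int_unsel expected_obj_step_le unfolding c_def K_def
    by (intro expectation_bind_pmf_le) auto
  also have "\<dots> = measure_pmf.expectation (iterate t) obj
      - c * (measure_pmf.expectation (iterate t) (\<lambda>\<theta>. (norm (grad_obj \<theta>))\<^sup>2)
        - measure_pmf.expectation (iterate t) (\<lambda>\<theta>. (norm (unsel_grad t \<theta>))\<^sup>2)) + K"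
    using int_obj int_grad int_unsel
    by (simp add: Bochner_Integration.integral_add Bochner_Integration.integral_diff
        right_diff_distrib)
  finally show ?thesis unfolding c_def K_def .
qed

end

theorem theorem1:
  fixes N L T :: nat
    and layer :: "'p::finite \<Rightarrow> nat"
    and F :: "nat \<Rightarrow> 'b \<Rightarrow> real^'p \<Rightarrow> real"
    and D :: "nat \<Rightarrow> 'b set"
    and Q :: "nat \<Rightarrow> 'b pmf"
    and S :: "nat \<Rightarrow> nat set"
    and Ls :: "nat \<Rightarrow> nat \<Rightarrow> nat set"
    and \<eta> \<gamma> \<sigma> :: real
    and \<sigma>l \<kappa> :: "nat \<Rightarrow> real"
    and \<theta>0 \<theta>s :: "real^'p"
  assumes N_pos: "N > 0"
    and layer_range: "\<forall>j. layer j \<in> {1..L}"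
    and layer_nonempty: "\<forall>l\<in>{1..L}. \<exists>j. layer j = l"
    and data: "\<forall>i\<in>{1..N}. finite (D i) \<and> D i \<noteq> {}"
    and S_sub: "\<forall>t. S t \<subseteq> {1..N}"
    and Ls_sub: "\<forall>t. \<forall>i\<in>S t. Ls t i \<subseteq> {1..L}"
    and diff: "\<forall>i\<in>{1..N}. \<forall>\<xi>\<in>D i \<union> set_pmf (Q i). \<forall>\<theta>. F i \<xi> differentiable (at \<theta>)"
    and minimizer: "\<forall>\<theta>. fglob N F D \<theta>s \<le> fglob N F D \<theta>"
    and eta_pos: "\<eta> > 0"
    and T_pos: "T > 0"
    and gamma_pos: "\<gamma> > 0"
    and smooth: "\<forall>i\<in>{1..N}. \<forall>\<theta> \<theta>'.
        norm (grad (fobj F D i) \<theta> - grad (fobj F D i) \<theta>') \<le> \<gamma> * norm (\<theta> - \<theta>')"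
    and unbiased: "\<forall>i\<in>{1..N}. \<forall>l\<in>{1..L}. \<forall>\<theta>.
        measure_pmf.expectation (Q i) (\<lambda>\<xi>. sgrad layer F i l \<theta> \<xi>)
          = lblock layer l (grad (fobj F D i) \<theta>)"
    and sigma_pos: "\<forall>l\<in>{1..L}. \<sigma>l l > 0"
    and bounded_var: "\<forall>i\<in>{1..N}. \<forall>l\<in>{1..L}. \<forall>\<theta>. \<forall>\<xi>\<in>set_pmf (Q i).
        (norm (sgrad layer F i l \<theta> \<xi> - lblock layer l (grad (fobj F D i) \<theta>)))\<^sup>2 \<le> (\<sigma>l l)\<^sup>2"
    and sigma_sum: "\<forall>t. (\<Sum>l\<in>Lsel S Ls t. (\<sigma>l l)\<^sup>2) \<le> \<sigma>\<^sup>2"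
    and kappa_pos: "\<forall>l\<in>{1..L}. \<kappa> l > 0"
    and diversity: "\<forall>i\<in>{1..N}. \<forall>l\<in>{1..L}. \<forall>\<theta>.
        (norm (lblock layer l (grad (fglob N F D) \<theta>) - lblock layer l (grad (fobj F D i) \<theta>)))\<^sup>2
          \<le> (\<kappa> l)\<^sup>2"
    and C_pos: "1 - 4 * \<eta> * \<gamma> > 0"
  shows "Min ((\<lambda>t. measure_pmf.expectation (traj N layer F D S Ls Q \<eta> \<theta>0 t)
                    (\<lambda>\<theta>. (norm (grad (fglob N F D) \<theta>))\<^sup>2)) ` {..<T})
    \<le> 2 / (\<eta> * (1 - 4 * \<eta> * \<gamma>) * real T) * (fglob N F D \<theta>0 - fglob N F D \<theta>s)
      + 2 * \<gamma> * \<eta> / (1 - 4 * \<eta> * \<gamma>) * \<sigma>\<^sup>2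
      + (1 / real T) * (\<Sum>t<T. (1 / (\<gamma> * \<eta> * (1 - 4 * \<eta> * \<gamma>)) + 2) *
          (measure_pmf.expectation (traj N layer F D S Ls Q \<eta> \<theta>0 t)
             (\<lambda>\<theta>. (norm (\<Sum>l\<in>{1..L} - Lsel S Ls t. lblock layer l (grad (fglob N F D) \<theta>)))\<^sup>2)
           + (\<Sum>l\<in>Lsel S Ls t. chi2 N D S Ls t l * (\<kappa> l)\<^sup>2)))"
proof -
  interpret selective_fl N L layer F D Q S Ls \<eta> \<gamma> \<sigma> \<sigma>l \<kappa> \<theta>0 \<theta>s
    using N_pos layer_range data S_sub Ls_sub diff minimizer eta_pos gamma_pos smooth unbiased
      bounded_var sigma_sum diversity
    by unfold_locales
  have "0 \<le> measure_pmf.expectation (iterate t) (\<lambda>\<theta>. (norm (unsel_grad t \<theta>))\<^sup>2)" for t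
    by (simp add: Bochner_Integration.integral_nonneg)
  from Min_le_of_biased_descent[where a = "\<lambda>t. measure_pmf.expectation (iterate t) obj"
      and g = "\<lambda>t. measure_pmf.expectation (iterate t) (\<lambda>\<theta>. (norm (grad_obj \<theta>))\<^sup>2)"
      and b = "\<lambda>t. measure_pmf.expectation (iterate t) (\<lambda>\<theta>. (norm (unsel_grad t \<theta>))\<^sup>2)",
      OF eta_pos gamma_pos C_pos T_pos expected_descent obj_min_le_expectation this
        div_error_nonneg]
  show ?thesis
    by (simp add: unsel_grad_def div_error_def)
qed

end
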